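(* The span of the parallel adaptive mergesort is $O(\lg^3 n)$ on inputs of size $n$, in the binary-fork-join model.
   Context: Binary-fork-join model: a process may fork two children that run in parallel, the parent resuming when both complete; span is the length of the longest dependence path. The parallel adaptive mergesort splits the input into two halves, sorts them recursively in parallel, and merges the resulting trees with mergeHT: if $T_1$ is empty return $T_2$; if $T_2$ is empty return $T_1$; otherwise let $k$ be the root key of $T_1$ (chosen so that it cuts off at least a constant fraction of the keys of $T_1$ on each side); $(L_2,R_2)=\mathrm{split}(T_2,k)$; $k_1=\max(L_2)$, $k_2=\min(R_2)$; $(L_1,I)=\mathrm{split}(T_1,k_1)$; $(M,R_1)=\mathrm{split}(I,k_2)$; in parallel $T_L=\mathrm{mergeHT}(L_1,L_2)$, $T_R=\mathrm{mergeHT}(R_1,R_2)$; return $\mathrm{join}(\mathrm{join}(T_L,M),T_R)$. Trees are heterogeneous finger search trees, for which $\mathrm{split}$ (into keys less than / greater than a given key) and $\mathrm{join}$ (of two trees with non-interleaving key ranges) take worst-case time $O(\lg\max(|T_1|,|T_2|))$. *)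

theory Defs
  imports Main "HOL.Transcendental"
begin

text \<open>A heterogeneous finger search tree is
represented by its (finite) key set.  Every split / join / max / min on trees whose
sizes sum to at most n is charged lgc n = 1 + lg (n + 2), i.e. the worst-case
O(lg max(|T1|,|T2|)) bound with an explicit constant.\<close>

definition lgc :: "nat \<Rightarrow> real" where
  "lgc n = 1 + log 2 (real n + 2)"

definition balanced_root :: "real \<Rightarrow> 'a::linorder set \<Rightarrow> 'a \<Rightarrow> bool" where
  "balanced_root c T k \<longleftrightarrow> k \<in> T
     \<and> real (card {x\<in>T. x < k}) \<ge> c * real (card T) - 1
     \<and> real (card {x\<in>T. k < x}) \<ge> c * real (card T) - 1"

text \<open>Worst-case span of mergeHT(T1,T2), maximised over all admissible root keys of T1.
 split(T2,k) = (L2,R2); k1 = max L2; k2 = min R2; (L1,I) = split(T1,k1); (M,R1) = split(I,k2);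
 in parallel the two recursive merges; then join(join(TL,M),TR).  When L2 (resp. R2) is
 empty, L1 (resp. R1) is empty.\<close>

function merge_span :: "real \<Rightarrow> 'a::linorder set \<Rightarrow> 'a set \<Rightarrow> real" where
  "merge_span c T1 T2 =
    (if \<not> finite T1 \<or> \<not> finite T2 \<or> T1 = {} \<or> T2 = {} then 1
     else 1 + Max ((\<lambda>k.
        let L2 = {y\<in>T2. y < k}; R2 = {y\<in>T2. k < y};
            L1 = {x\<in>T1. \<exists>y\<in>L2. x < y}; R1 = {x\<in>T1. \<exists>y\<in>R2. y < x};
            M = T1 - L1 - R1
        in 3 * lgc (card T2) + 2 * lgc (card T1)
           + max (merge_span c L1 L2) (merge_span c R1 R2)
           + lgc (card L1 + card L2 + card M) + lgc (card T1 + card T2))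
        ` {k. balanced_root c T1 k}))"
  by pat_completeness auto
termination
proof (relation "measure (\<lambda>(c, T1, T2). card T1)", goal_cases)
  case 1 then show ?case by simp
next
  case (2 c T1 T2 x L2 R2 L1 R1 M)
  have fin: "finite T1" and xT: "x \<in> T1" using 2(1,2) by (auto simp: balanced_root_def)
  have "L1 \<subseteq> T1 - {x}" unfolding 2(3,5) by auto
  then have "card L1 < card T1" using fin xT
    by (metis card_Diff1_less card_mono finite_Diff order_le_less_trans)
  then show ?case by simp
next
  case (3 c T1 T2 x L2 R2 L1 R1 M)
  have fin: "finite T1" and xT: "x \<in> T1" using 3(1,2) by (auto simp: balanced_root_def)
  have "R1 \<subseteq> T1 - {x}" unfolding 3(4,6) by auto
  then have "card R1 < card T1" using fin xT
    by (metis card_Diff1_less card_mono finite_Diff order_le_less_trans)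
  then show ?case by simp
qed

function sort_span :: "real \<Rightarrow> 'a::linorder list \<Rightarrow> real" where
  "sort_span c xs =
    (if length xs \<le> 1 then 1
     else 1 + max (sort_span c (take (length xs div 2) xs))
                  (sort_span c (drop (length xs div 2) xs))
            + merge_span c (set (take (length xs div 2) xs)) (set (drop (length xs div 2) xs)))"
  by pat_completeness auto
termination
  by (relation "measure (\<lambda>(c, xs). length xs)") auto

end

theory Submission
  imports Defs
begin

(* One level of mergeHT on trees of total size at most n costs at most 1 + 7 lgc n, and a
   balanced root key leaves at most a (1 - c)-fraction of T1 on either side, so the recursion
   depth is at most 2 + log_{1/(1-c)} |T1| and the span of mergeHT is O(lg^2 n).
   Mergesort recurses on halves of size at most 3n/4, so with a = 1 + lg n and d = lg (4/3) its
   span satisfies S(a) <= 1 + S(a - d) + E a^2; the bound G a^3 propagates because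
   a^3 - (a - d)^3 >= d a^2. *)

declare merge_span.simps [simp del] sort_span.simps [simp del]

lemma card_less_plus_card_greater:
  fixes T :: "'a::linorder set"
  assumes "finite T" "k \<in> T"
  shows "card {x\<in>T. x < k} + card {x\<in>T. k < x} + 1 = card T"
proof -
  have "T = {x\<in>T. x < k} \<union> {x\<in>T. k < x} \<union> {k}" using assms by auto
  moreover have "card ({x\<in>T. x < k} \<union> {x\<in>T. k < x} \<union> {k})
      = card {x\<in>T. x < k} + card {x\<in>T. k < x} + 1"
    using assms by (subst card_Un_disjoint, auto)+
  ultimately show ?thesis by simp
qed

lemma card_less_nth_sorted_list_of_set:
  fixes T :: "'a::linorder set"
  assumes "finite T" "i < card T"
  shows "card {x\<in>T. x < sorted_list_of_set T ! i} = i"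
proof -
  define xs where "xs = sorted_list_of_set T"
  have sorted: "sorted_wrt (<) xs" and setxs: "set xs = T" and len: "length xs = card T"
    using assms(1) unfolding xs_def by auto
  have "{x\<in>T. x < xs ! i} = set (take i xs)"
  proof (intro set_eqI iffI)
    fix x assume "x \<in> {x\<in>T. x < xs ! i}"
    then obtain j where j: "j < length xs" "x = xs ! j" and less: "xs ! j < xs ! i"
      by (auto simp: in_set_conv_nth simp flip: setxs)
    have "j < i"
    proof (rule ccontr)
      assume "\<not> j < i"
      then have "xs ! i \<le> xs ! j"
        using sorted j(1) by (intro sorted_nth_mono) (auto simp: strict_sorted_iff)
      with less show False by simp
    qed
    then show "x \<in> set (take i xs)"
      using j by (auto simp: in_set_conv_nth)
  next
    fix x assume x: "x \<in> set (take i xs)"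
    then obtain j where "j < i" "x = xs ! j"
      using assms(2) len by (auto simp: in_set_conv_nth)
    moreover have "x \<in> T" using x setxs in_set_takeD by fast
    ultimately show "x \<in> {x\<in>T. x < xs ! i}"
      using sorted assms(2) len by (simp add: sorted_wrt_nth_less)
  qed
  moreover have "distinct xs" using sorted by (simp add: strict_sorted_iff)
  ultimately show ?thesis using assms(2) len by (simp add: distinct_card xs_def)
qed

lemma balanced_root_exists:
  fixes T :: "'a::linorder set"
  assumes "c \<le> 1/2" "finite T" "T \<noteq> {}"
  shows "\<exists>k. balanced_root c T k"
proof -
  define m where "m = card T"
  define i where "i = (m - 1) div 2"
  define k where "k = sorted_list_of_set T ! i"
  have m0: "0 < m" using assms(2,3) unfolding m_def by (simp add: card_gt_0_iff)
  then have "i < m" unfolding i_def by simp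
  then have "k \<in> set (sorted_list_of_set T)"
    using assms(2) unfolding k_def m_def by (intro nth_mem) simp
  then have kT: "k \<in> T" using assms(2) by simp
  have less: "card {x\<in>T. x < k} = i"
    using card_less_nth_sorted_list_of_set[OF assms(2)] \<open>i < m\<close> unfolding k_def m_def by blast
  have greater: "card {x\<in>T. k < x} = m - 1 - i"
    using card_less_plus_card_greater[OF assms(2) kT] less unfolding m_def by linarith
  have "c * m \<le> 1/2 * m" using assms(1) by (intro mult_right_mono) auto
  moreover have "real m / 2 - 1 \<le> i" "real m / 2 - 1 \<le> m - 1 - i"
    using m0 unfolding i_def by linarith+
  ultimately show ?thesis
    using kT less greater unfolding balanced_root_def m_def by (intro exI[of _ k]) auto
qed

lemma balanced_root_card_less:
  fixes T :: "'a::linorder set" and c :: real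
  assumes "finite T" "balanced_root c T k"
  shows "real (card {x\<in>T. x < k}) \<le> (1 - c) * real (card T)"
    and "real (card {x\<in>T. k < x}) \<le> (1 - c) * real (card T)"
proof -
  have "card {x\<in>T. x < k} + card {x\<in>T. k < x} + 1 = card T"
    using assms by (intro card_less_plus_card_greater) (auto simp: balanced_root_def)
  then have "real (card {x\<in>T. x < k}) + real (card {x\<in>T. k < x}) + 1 = real (card T)"
    by linarith
  then show "real (card {x\<in>T. x < k}) \<le> (1 - c) * real (card T)"
    "real (card {x\<in>T. k < x}) \<le> (1 - c) * real (card T)"
    using assms(2) unfolding balanced_root_def left_diff_distrib by linarith+
qed

lemma log_le_diff_if_le_divide:
  fixes b q x y :: real
  assumes "1 < b" "0 < q" "0 < x" "x \<le> y / q"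
  shows "log b x \<le> log b y - log b q"
proof -
  have "0 < y / q" using assms(3,4) by linarith
  then have "0 < y" using assms(2) by (simp add: zero_less_divide_iff)
  have "log b x \<le> log b (y / q)" using assms by (subst log_le_cancel_iff) auto
  also have "\<dots> = log b y - log b q" using assms \<open>0 < y\<close> by (simp add: log_divide)
  finally show ?thesis .
qed

lemma lgc_mono: "m \<le> n \<Longrightarrow> lgc m \<le> lgc n"
  unfolding lgc_def by simp

lemma merge_span_empty_left: "merge_span c {} T2 = 1"
  by (simp add: merge_span.simps)

lemma merge_span_empty_right: "merge_span c T1 {} = 1"
  by (simp add: merge_span.simps)

lemma lgc_level_cost_le:
  fixes T1 T2 :: "'a set"
  assumes "finite T1" "finite T2" "card T1 + card T2 \<le> n"
    and "L1 \<union> M \<subseteq> T1" "L1 \<inter> M = {}" "L2 \<subseteq> T2"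
  shows "3 * lgc (card T2) + 2 * lgc (card T1) + lgc (card L1 + card L2 + card M)
    + lgc (card T1 + card T2) \<le> 7 * lgc n"
proof -
  have "card L1 + card M \<le> card T1"
    using assms(1,4,5) card_mono[OF assms(1,4)] finite_subset[OF assms(4,1)]
    by (simp add: card_Un_disjoint)
  moreover have "card L2 \<le> card T2" using assms(2,6) by (rule card_mono)
  ultimately have "lgc (card L1 + card L2 + card M) \<le> lgc n"
    using assms(3) by (intro lgc_mono) linarith
  moreover have "lgc (card T1) \<le> lgc n" "lgc (card T2) \<le> lgc n" "lgc (card T1 + card T2) \<le> lgc n"
    using assms(3) by (auto intro: lgc_mono)
  ultimately show ?thesis by linarith
qed

lemma merge_span_recurrence:
  fixes T1 T2 :: "'a::linorder set" and c :: real
  assumes "c \<le> 1/2" "finite T1" "finite T2" "T1 \<noteq> {}" "T2 \<noteq> {}"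
    and "card T1 + card T2 \<le> n"
    and children: "\<And>L1 L2. L1 \<subseteq> T1 \<Longrightarrow> L2 \<subseteq> T2 \<Longrightarrow> card L1 \<le> (1 - c) * card T1 \<Longrightarrow>
      merge_span c L1 L2 \<le> B"
  shows "merge_span c T1 T2 \<le> 1 + 7 * lgc n + B"
proof -
  define S where "S = {k. balanced_root c T1 k}"
  define f where "f = (\<lambda>k.
    let L2 = {y\<in>T2. y < k}; R2 = {y\<in>T2. k < y};
        L1 = {x\<in>T1. \<exists>y\<in>L2. x < y}; R1 = {x\<in>T1. \<exists>y\<in>R2. y < x};
        M = T1 - L1 - R1
    in 3 * lgc (card T2) + 2 * lgc (card T1)
       + max (merge_span c L1 L2) (merge_span c R1 R2)
       + lgc (card L1 + card L2 + card M) + lgc (card T1 + card T2))"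
  have unfold: "merge_span c T1 T2 = 1 + Max (f ` S)"
    using assms(2-5) unfolding f_def S_def by (subst merge_span.simps) simp
  have "finite S" unfolding S_def using assms(2)
    by (rule rev_finite_subset) (auto simp: balanced_root_def)
  moreover have "S \<noteq> {}" unfolding S_def using balanced_root_exists[OF assms(1,2,4)] by blast
  moreover have "f k \<le> 7 * lgc n + B" if "k \<in> S" for k
  proof -
    define L2 where "L2 = {y\<in>T2. y < k}"
    define R2 where "R2 = {y\<in>T2. k < y}"
    define L1 where "L1 = {x\<in>T1. \<exists>y\<in>L2. x < y}"
    define R1 where "R1 = {x\<in>T1. \<exists>y\<in>R2. y < x}"
    have k: "balanced_root c T1 k" using that unfolding S_def by simp
    have "card L1 \<le> card {x\<in>T1. x < k}" "card R1 \<le> card {x\<in>T1. k < x}"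
      using assms(2) unfolding L1_def L2_def R1_def R2_def by (auto intro!: card_mono)
    then have "card L1 \<le> (1 - c) * card T1" "card R1 \<le> (1 - c) * card T1"
      using balanced_root_card_less[OF assms(2) k] by (meson of_nat_le_iff order_trans)+
    then have "max (merge_span c L1 L2) (merge_span c R1 R2) \<le> B"
      by (auto intro!: children simp: L1_def L2_def R1_def R2_def)
    moreover have "f k = 3 * lgc (card T2) + 2 * lgc (card T1)
        + max (merge_span c L1 L2) (merge_span c R1 R2)
        + lgc (card L1 + card L2 + card (T1 - L1 - R1)) + lgc (card T1 + card T2)"
      unfolding f_def L1_def L2_def R1_def R2_def Let_def ..
    moreover have "3 * lgc (card T2) + 2 * lgc (card T1) + lgc (card L1 + card L2 + card (T1 - L1 - R1))
        + lgc (card T1 + card T2) \<le> 7 * lgc n"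
      using assms(2,3,6) by (rule lgc_level_cost_le) (auto simp: L1_def L2_def)
    ultimately show ?thesis by linarith
  qed
  ultimately have "Max (f ` S) \<le> 7 * lgc n + B" by (intro Max.boundedI) auto
  then show ?thesis unfolding unfold by simp
qed

lemma merge_span_le_log:
  fixes T1 T2 :: "'a::linorder set"
  assumes c: "0 < c" "c \<le> 1/2"
    and "finite T1" "finite T2" "T1 \<noteq> {}" "card T1 + card T2 \<le> n"
  shows "merge_span c T1 T2 \<le> (1 + 7 * lgc n) * (2 + log (1 / (1 - c)) (card T1))"
  using assms(3-)
proof (induction "card T1" arbitrary: T1 T2 rule: less_induct)
  case less
  define b where "b = 1 / (1 - c)"
  define W where "W = 1 + 7 * lgc n"
  define m where "m = card T1"
  have b: "1 < b" unfolding b_def using c by (simp add: field_simps)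
  have W: "1 \<le> W" unfolding W_def lgc_def by simp
  have m: "1 \<le> m" using less.prems unfolding m_def by (simp add: Suc_leI card_gt_0_iff)
  have "1 \<le> 1 + log b m" using b m by simp
  with W have one_le: "1 \<le> W * (1 + log b m)" by (rule mult_ge1_I)
  have children: "merge_span c L1 L2 \<le> W * (1 + log b m)"
    if "L1 \<subseteq> T1" "L2 \<subseteq> T2" "card L1 \<le> (1 - c) * card T1" for L1 L2
  proof (cases "L1 = {}")
    case True
    then show ?thesis using one_le by (simp add: merge_span_empty_left)
  next
    case False
    have fin: "finite L1" "finite L2" using that less.prems finite_subset by blast+
    have L1: "1 \<le> card L1" using False fin by (simp add: Suc_leI card_gt_0_iff)
    have "(1 - c) * m < m" using c m by (simp add: algebra_simps)
    then have "card L1 < card T1" using that(3) unfolding m_def by linarith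
    moreover have "card L1 + card L2 \<le> n"
      using that less.prems(4) card_mono[OF less.prems(1) that(1)] card_mono[OF less.prems(2) that(2)]
      by linarith
    ultimately have IH: "merge_span c L1 L2 \<le> W * (2 + log b (card L1))"
      using less.hyps fin False unfolding W_def b_def by blast
    have "card L1 \<le> m / b" using that(3) unfolding b_def m_def by (simp add: mult.commute)
    then have "log b (card L1) \<le> log b m - 1"
      using log_le_diff_if_le_divide[of b b "card L1" m] b L1 by simp
    then have "W * (2 + log b (card L1)) \<le> W * (1 + log b m)"
      using W by (intro mult_left_mono) auto
    with IH show ?thesis by linarith
  qed
  have "merge_span c T1 T2 \<le> 1 + 7 * lgc n + W * (1 + log b m)"
  proof (cases "T2 = {}")
    case True
    then show ?thesis using one_le by (simp add: merge_span_empty_right lgc_def)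
  next
    case False
    from c(2) less.prems(1-3) False less.prems(4) children show ?thesis
      by (rule merge_span_recurrence)
  qed
  then show ?case unfolding W_def b_def m_def by (simp add: algebra_simps)
qed

lemma lgc_le_log: "1 \<le> n \<Longrightarrow> lgc n \<le> 3 * (1 + log 2 n)"
proof -
  assume n: "1 \<le> n"
  have "log 2 (real n + 2) \<le> log 2 (4 * real n)" using n by (subst log_le_cancel_iff) auto
  also have "\<dots> = 2 + log 2 n" using n log_pow_cancel[of 2 2] by (simp add: log_mult)
  finally have "lgc n \<le> 3 + log 2 n" unfolding lgc_def by simp
  moreover have "0 \<le> log 2 n" using n by simp
  ultimately show ?thesis by simp
qed

lemma merge_span_le_log_square:
  fixes T1 T2 :: "'a::linorder set"
  assumes c: "0 < c" "c \<le> 1/2"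
    and T: "finite T1" "finite T2" "T1 \<noteq> {}" and n: "card T1 + card T2 \<le> n"
  shows "merge_span c T1 T2 \<le> 22 * (2 + log (1 / (1 - c)) 2) * (1 + log 2 n)^2"
proof -
  define b where "b = 1 / (1 - c)"
  define a where "a = 1 + log 2 n"
  have b: "1 < b" unfolding b_def using c by (simp add: field_simps)
  have m: "1 \<le> card T1" using T by (simp add: Suc_leI card_gt_0_iff)
  with n have "1 \<le> n" by linarith
  then have a: "1 \<le> a" unfolding a_def by simp
  have "lgc n \<le> 3 * a" unfolding a_def using \<open>1 \<le> n\<close> by (rule lgc_le_log)
  then have "1 + 7 * lgc n \<le> 22 * a" using a by linarith
  moreover have "2 + log b (card T1) \<le> (2 + log b 2) * a"
  proof -
    have "log b (card T1) \<le> log b n" using m n b by (subst log_le_cancel_iff) auto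
    also have "\<dots> = log b 2 * log 2 n" by (simp add: log_def)
    moreover have "0 < log b 2" using b by simp
    ultimately show ?thesis using a unfolding a_def by (simp add: algebra_simps)
  qed
  moreover have "0 \<le> 2 + log b (card T1)" using m b by simp
  ultimately have "(1 + 7 * lgc n) * (2 + log b (card T1)) \<le> 22 * a * ((2 + log b 2) * a)"
    using a by (intro mult_mono) auto
  then show ?thesis
    using merge_span_le_log[OF c T n] unfolding a_def b_def
    by (simp add: power2_eq_square algebra_simps)
qed

lemma cube_bound_step:
  fixes a d E G :: real
  assumes "0 < d" "1 \<le> a - d" "0 \<le> G" "1 + E \<le> G * d"
  shows "1 + E * a^2 + G * (a - d)^3 \<le> G * a^3"
proof -
  have "1 \<le> a^2" using assms(1,2) by (simp add: one_le_power)
  then have "1 + E * a^2 \<le> (1 + E) * a^2" by (simp add: algebra_simps)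
  also have "\<dots> \<le> (G * d) * a^2" using assms(4) by (intro mult_right_mono) auto
  also have "\<dots> \<le> G * (a^3 - (a - d)^3)"
  proof -
    have "a^3 - (a - d)^3 = d * a^2 + d * ((a - d) * (2 * a - d))"
      by (simp add: power2_eq_square power3_eq_cube algebra_simps)
    moreover have "0 \<le> d * ((a - d) * (2 * a - d))" using assms(1,2) by simp
    ultimately have "d * a^2 \<le> a^3 - (a - d)^3" by linarith
    then show ?thesis using assms(3) unfolding mult.assoc by (rule mult_left_mono)
  qed
  finally show ?thesis by (simp add: algebra_simps)
qed

lemma sort_span_le_cube:
  fixes E :: real and xs :: "'a::linorder list"
  assumes E: "0 \<le> E"
    and merge: "\<And>(T1 :: 'a set) T2 n. finite T1 \<Longrightarrow> finite T2 \<Longrightarrow> T1 \<noteq> {} \<Longrightarrow>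
      card T1 + card T2 \<le> n \<Longrightarrow> merge_span c T1 T2 \<le> E * (1 + log 2 n)^2"
    and "xs \<noteq> []"
  shows "sort_span c xs \<le> ((1 + E) / log 2 (4/3) + 1) * (1 + log 2 (length xs))^3"
  using assms(3)
proof (induction xs rule: length_induct)
  case (1 xs)
  define d :: real where "d = log 2 (4/3)"
  define G where "G = (1 + E) / d + 1"
  define n where "n = length xs"
  define a where "a = 1 + log 2 n"
  have d: "0 < d" unfolding d_def by simp
  have G: "1 \<le> G" "1 + E \<le> G * d" unfolding G_def using d E by (auto simp: field_simps)
  have n: "1 \<le> n" using "1.prems" unfolding n_def by (simp add: Suc_leI)
  have "sort_span c xs \<le> G * a^3"
  proof (cases "n = 1")
    case True
    then show ?thesis using G unfolding n_def a_def by (simp add: sort_span.simps)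
  next
    case False
    define h where "h = n div 2"
    have shrink: "1 + log 2 m \<le> a - d" if "1 \<le> m" "4 * m \<le> 3 * n" for m :: nat
      using log_le_diff_if_le_divide[of 2 "4/3" m n] that unfolding a_def d_def by simp
    have half: "sort_span c ys \<le> G * (a - d)^3"
      if "ys \<noteq> []" "length ys < n" "4 * length ys \<le> 3 * n" for ys :: "'a list"
    proof -
      have "sort_span c ys \<le> G * (1 + log 2 (length ys))^3"
        using "1.IH" that unfolding G_def d_def n_def by blast
      also have "\<dots> \<le> G * (a - d)^3"
        using that G shrink[of "length ys"] by (intro mult_left_mono power_mono) (auto simp: Suc_leI)
      finally show ?thesis .
    qed
    have "1 \<le> h" "4 * h \<le> 3 * n" "4 * (n - h) \<le> 3 * n" "h < n"
      using n False unfolding h_def by auto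
    then have halves:
        "sort_span c (take h xs) \<le> G * (a - d)^3" "sort_span c (drop h xs) \<le> G * (a - d)^3"
      by (auto intro!: half simp: n_def)
    have "card (set (take h xs)) + card (set (drop h xs)) \<le> n"
      using card_length[of "take h xs"] card_length[of "drop h xs"] \<open>h < n\<close> unfolding n_def by simp
    then have merged: "merge_span c (set (take h xs)) (set (drop h xs)) \<le> E * a^2"
      unfolding a_def using \<open>1 \<le> h\<close> \<open>h < n\<close> unfolding n_def by (intro merge) auto
    have "0 \<le> log 2 h" using \<open>1 \<le> h\<close> by simp
    then have "1 \<le> a - d" using shrink[OF \<open>1 \<le> h\<close> \<open>4 * h \<le> 3 * n\<close>] by linarith
    then have "1 + E * a^2 + G * (a - d)^3 \<le> G * a^3" using d G by (intro cube_bound_step) auto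
    moreover have "sort_span c xs = 1 + max (sort_span c (take h xs)) (sort_span c (drop h xs))
        + merge_span c (set (take h xs)) (set (drop h xs))"
      using False n unfolding h_def n_def by (subst sort_span.simps) simp
    ultimately show ?thesis using halves merged by linarith
  qed
  then show ?case unfolding G_def d_def a_def n_def .
qed

theorem lemma10:
  fixes c :: real
  assumes "0 < c" and "c \<le> 1/2"
  shows "\<exists>C. \<forall>xs :: 'a::linorder list. distinct xs \<and> length xs \<ge> 2 \<longrightarrow>
           sort_span c xs \<le> C * (log 2 (real (length xs))) ^ 3"
proof -
  define E where "E = 22 * (2 + log (1 / (1 - c)) 2)"
  define G where "G = (1 + E) / log 2 (4/3) + 1"
  have "1 < 1 / (1 - c)" using assms by (simp add: field_simps)
  then have E: "0 \<le> E" unfolding E_def by simp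
  have "sort_span c xs \<le> 8 * G * (log 2 (length xs))^3" if "2 \<le> length xs" for xs :: "'a list"
  proof -
    define L where "L = log 2 (length xs)"
    have "log 2 2 \<le> L" unfolding L_def using that by (subst log_le_cancel_iff) auto
    then have L: "1 \<le> L" by simp
    have "sort_span c xs \<le> G * (1 + L)^3"
      unfolding G_def L_def using that E merge_span_le_log_square[OF assms] unfolding E_def
      by (intro sort_span_le_cube) auto
    also have "\<dots> \<le> G * (2 * L)^3"
      using L E unfolding G_def by (intro mult_left_mono power_mono) auto
    finally show ?thesis unfolding L_def by (simp add: power_mult_distrib)
  qed
  then show ?thesis by blast
qed

end
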